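(* Let $K$ be a field, $A$ a $K$-algebra and $X$ a set such that, for some $P\subseteq K[X^*]$, the natural morphism $\theta:K[X^*]\to A$ induces an isomorphism $K[X^*]/\langle P\rangle\to A$ (where $\langle P\rangle$ is the two-sided ideal generated by $P$). Let $Q\subseteq K[X^*]$ and $Q':=\theta(Q)$. Define the mixed set $F:=(\dashv\! Q,P)$ with tagged part $\dashv\! Q=\{\dashv\! q: q\in Q\}$ and untagged part $P$. Then there is a bijection of sets $$\frac{K[\dashv\! X^*]}{\stackrel{*}{\leftrightarrow}_F}\;\cong\;\frac{A}{\langle Q'\rangle^r},$$ where $\langle Q'\rangle^r$ is the right ideal of $A$ generated by $Q'$ and $A/\langle Q'\rangle^r$ is the set of classes under $a\sim b\iff a-b\in\langle Q'\rangle^r$.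
   Context: $X^*$ is the free monoid on $X$ (including the empty word $id$) and $K[X^*]$ the free noncommutative $K$-algebra with identity on $X$. A monoid well-ordering $>$ on $X^*$ is fixed (a well-ordering such that $m_1>m_2\Rightarrow um_1v>um_2v$ for $u,v\in X^*$); for a nonzero polynomial, $\mathtt{LT}$ is its largest term and $\mathtt{LC}$ its coefficient. Tagged polynomials: $\dashv$ is a symbol; $K[\dashv\! X^*]$ is the $K$-vector space with basis the tagged terms $\dashv\! m$ ($m\in X^*$), a right $K[X^*]$-module via $(\dashv\! m)w=\dashv\!(mw)$. For $p=\sum k_im_i\in K[X^*]$ and $w\in X^*$, $\dashv\! w\,p:=\sum k_i\dashv\!(wm_i)$ and $\dashv\! p:=\dashv\! id\,p$; tagged terms are ordered by $\dashv\! m_1>\dashv\! m_2\iff m_1>m_2$. Reduction: for a mixed set $F=(F_T,F_P)$, $F_T\subseteq K[\dashv\! X^*]$, $F_P\subseteq K[X^*]$ (zero elements ignored), $\to_F$ on $K[\dashv\! X^*]$ is: $f\to_F f-\frac{k}{\mathtt{LC}(f_i)}f_iv$ if $f_i\in F_T$, $v\in X^*$ and $\mathtt{LT}(f_i)v$ occurs in $f$ with coefficient $k\neq0$; and $f\to_F f-\frac{k}{\mathtt{LC}(f_i)}\dashv\! w\,f_i\,v$ if $f_i\in F_P$, $w,v\in X^*$ and $\dashv\!(w\,\mathtt{LT}(f_i)\,v)$ occurs in $f$ with coefficient $k\ne0$. (The paper normalizes all polynomials to be monic.) $\stackrel{*}{\leftrightarrow}_F$ is the reflexive, symmetric, transitive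 closure of $\to_F$. *)

theory Defs
  imports Main "HOL-Library.Poly_Mapping"
begin

text \<open>Words of the free monoid X* are lists; the empty word id is [].
  K[X*] is represented by finitely supported maps 'x list =>0 'k.\<close>

type_synonym ('x, 'k) ncpoly = "'x list \<Rightarrow>\<^sub>0 'k"

text \<open>Tagged terms (the symbol \<dashv> applied to a word) and tagged polynomials.\<close>
datatype 'x tterm = Tag "'x list"

type_synonym ('x, 'k) tpoly = "'x tterm \<Rightarrow>\<^sub>0 'k"

fun untag :: "'x tterm \<Rightarrow> 'x list" where "untag (Tag m) = m"

definition ncmul :: "('x, 'k::comm_semiring_1) ncpoly \<Rightarrow> ('x, 'k) ncpoly \<Rightarrow> ('x, 'k) ncpoly" where
  "ncmul p q = (\<Sum>u\<in>Poly_Mapping.keys p. \<Sum>v\<in>Poly_Mapping.keys q. Poly_Mapping.single (u @ v) (Poly_Mapping.lookup p u * Poly_Mapping.lookup q v))"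

definition psmult :: "'k::semiring_0 \<Rightarrow> ('t \<Rightarrow>\<^sub>0 'k) \<Rightarrow> ('t \<Rightarrow>\<^sub>0 'k)" where
  "psmult c f = Poly_Mapping.map (\<lambda>a. c * a) f"

definition tag_left :: "'x list \<Rightarrow> ('x, 'k::comm_monoid_add) ncpoly \<Rightarrow> ('x, 'k) tpoly" where
  "tag_left w p = (\<Sum>m\<in>Poly_Mapping.keys p. Poly_Mapping.single (Tag (w @ m)) (Poly_Mapping.lookup p m))"

definition tag :: "('x, 'k::comm_monoid_add) ncpoly \<Rightarrow> ('x, 'k) tpoly" where
  "tag p = tag_left [] p"

definition tright :: "('x, 'k::comm_monoid_add) tpoly \<Rightarrow> 'x list \<Rightarrow> ('x, 'k) tpoly" where
  "tright f v = (\<Sum>t\<in>Poly_Mapping.keys f. Poly_Mapping.single (Tag (untag t @ v)) (Poly_Mapping.lookup f t))"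

definition monoid_wellorder :: "('x list \<Rightarrow> 'x list \<Rightarrow> bool) \<Rightarrow> bool" where
  "monoid_wellorder lt \<longleftrightarrow>
     (\<forall>a. \<not> lt a a) \<and> (\<forall>a b c. lt a b \<longrightarrow> lt b c \<longrightarrow> lt a c) \<and>
     (\<forall>a b. a \<noteq> b \<longrightarrow> lt a b \<or> lt b a) \<and> wfP lt \<and>
     (\<forall>m1 m2 u v. lt m2 m1 \<longrightarrow> lt (u @ m2 @ v) (u @ m1 @ v))"

text \<open>Leading term and leading coefficient (for nonzero polynomials).\<close>
definition LT :: "('x list \<Rightarrow> 'x list \<Rightarrow> bool) \<Rightarrow> ('x, 'k::zero) ncpoly \<Rightarrow> 'x list" where
  "LT lt p = (THE m. m \<in> Poly_Mapping.keys p \<and> (\<forall>m'\<in>Poly_Mapping.keys p. m' \<noteq> m \<longrightarrow> lt m' m))"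

definition LC :: "('x list \<Rightarrow> 'x list \<Rightarrow> bool) \<Rightarrow> ('x, 'k::zero) ncpoly \<Rightarrow> 'k" where
  "LC lt p = Poly_Mapping.lookup p (LT lt p)"

definition tLT :: "('x list \<Rightarrow> 'x list \<Rightarrow> bool) \<Rightarrow> ('x, 'k::zero) tpoly \<Rightarrow> 'x tterm" where
  "tLT lt f = (THE t. t \<in> Poly_Mapping.keys f \<and> (\<forall>t'\<in>Poly_Mapping.keys f. t' \<noteq> t \<longrightarrow> lt (untag t') (untag t)))"

definition tLC :: "('x list \<Rightarrow> 'x list \<Rightarrow> bool) \<Rightarrow> ('x, 'k::zero) tpoly \<Rightarrow> 'k" where
  "tLC lt f = Poly_Mapping.lookup f (tLT lt f)"

text \<open>One reduction step \<rightarrow>_F for the mixed set F = (FT, FP).\<close>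
definition red :: "('x list \<Rightarrow> 'x list \<Rightarrow> bool) \<Rightarrow> ('x, 'k::field) tpoly set \<Rightarrow> ('x, 'k) ncpoly set
                   \<Rightarrow> ('x, 'k) tpoly \<Rightarrow> ('x, 'k) tpoly \<Rightarrow> bool" where
  "red lt FT FP f g \<longleftrightarrow>
     (\<exists>fi\<in>FT. fi \<noteq> 0 \<and> (\<exists>v. Poly_Mapping.lookup f (Tag (untag (tLT lt fi) @ v)) \<noteq> 0 \<and>
        g = f - psmult (Poly_Mapping.lookup f (Tag (untag (tLT lt fi) @ v)) / tLC lt fi) (tright fi v))) \<or>
     (\<exists>fi\<in>FP. fi \<noteq> 0 \<and> (\<exists>w v. Poly_Mapping.lookup f (Tag (w @ LT lt fi @ v)) \<noteq> 0 \<and>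
        g = f - psmult (Poly_Mapping.lookup f (Tag (w @ LT lt fi @ v)) / LC lt fi) (tag_left w (ncmul fi (Poly_Mapping.single v 1)))))"

inductive_set ideal2 :: "('x, 'k::comm_ring_1) ncpoly set \<Rightarrow> ('x, 'k) ncpoly set" for P where
  zero: "0 \<in> ideal2 P"
| gen: "p \<in> P \<Longrightarrow> p \<in> ideal2 P"
| add: "a \<in> ideal2 P \<Longrightarrow> b \<in> ideal2 P \<Longrightarrow> a + b \<in> ideal2 P"
| lmul: "a \<in> ideal2 P \<Longrightarrow> ncmul u a \<in> ideal2 P"
| rmul: "a \<in> ideal2 P \<Longrightarrow> ncmul a u \<in> ideal2 P"

inductive_set rideal :: "'a::ring_1 set \<Rightarrow> 'a set" for Q where
  zero: "0 \<in> rideal Q"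
| gen: "q \<in> Q \<Longrightarrow> q \<in> rideal Q"
| add: "a \<in> rideal Q \<Longrightarrow> b \<in> rideal Q \<Longrightarrow> a + b \<in> rideal Q"
| rmul: "a \<in> rideal Q \<Longrightarrow> a * r \<in> rideal Q"

text \<open>A K-algebra structure on a ring A: a ring homomorphism K \<rightarrow> A landing in the centre.\<close>
definition k_algebra :: "('k::field \<Rightarrow> 'a::ring_1) \<Rightarrow> bool" where
  "k_algebra \<iota> \<longleftrightarrow> (\<forall>a b. \<iota> (a + b) = \<iota> a + \<iota> b) \<and> (\<forall>a b. \<iota> (a * b) = \<iota> a * \<iota> b) \<and>
     \<iota> 1 = 1 \<and> (\<forall>c x. \<iota> c * x = x * \<iota> c)"

text \<open>The natural morphism \<theta> : K[X*] \<rightarrow> A determined by the images g of the letters.\<close>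
definition theta :: "('k::field \<Rightarrow> 'a::ring_1) \<Rightarrow> ('x \<Rightarrow> 'a) \<Rightarrow> ('x, 'k) ncpoly \<Rightarrow> 'a" where
  "theta \<iota> g p = (\<Sum>m\<in>Poly_Mapping.keys p. \<iota> (Poly_Mapping.lookup p m) * prod_list (map g m))"

end

theory Submission
  imports Defs
begin

text \<open>The map \<open>\<Phi> f = \<theta> (untag f)\<close> from tagged polynomials onto \<open>A\<close> identifies the classes
  of \<open>\<leftrightarrow>\<^sup>*\<^sub>F\<close> with the cosets of \<open>\<langle>Q'\<rangle>\<^sup>r\<close>. A reduction step by a tagged rule \<open>\<dashv>q\<close>
  subtracts a multiple of \<open>\<dashv>q v\<close>, whose image \<open>\<theta>(q) \<theta>(v)\<close> lies in \<open>\<langle>Q'\<rangle>\<^sup>r\<close>; a step by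
  \<open>p \<in> P\<close> subtracts a multiple of \<open>\<dashv>w p v\<close>, whose image vanishes. Conversely, the shifts \<open>d\<close>
  with \<open>f \<leftrightarrow>\<^sup>* f + d\<close> for all \<open>f\<close> form an additive group containing every multiple \<open>c e\<close>
  of a rule polynomial \<open>e\<close>: both \<open>f\<close> and \<open>f + c e\<close> reduce (in at most one step) to the
  element of \<open>f + K e\<close> whose coefficient at the leading term of \<open>e\<close> is zero. Hence this group
  contains \<open>\<dashv>\<langle>P\<rangle>\<close> and \<open>\<dashv>(Q K[X*])\<close>; since \<open>\<theta>\<close> is onto with kernel \<open>\<langle>P\<rangle>\<close>, every
  difference whose image lies in \<open>\<langle>Q'\<rangle>\<^sup>r\<close> is such a shift.\<close>

section \<open>Noncommutative polynomials as poly-mappings\<close>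

text \<open>Concatenation makes words a \<open>monoid_add\<close>, so the convolution product of poly-mappings
  on \<open>'x list \<Rightarrow>\<^sub>0 'k\<close> is the product of \<open>K[X*]\<close>.\<close>

instantiation list :: (type) monoid_add
begin
definition zero_list :: "'a list" where "zero_list = []"
definition plus_list :: "'a list \<Rightarrow> 'a list \<Rightarrow> 'a list" where "plus_list = (@)"
instance by standard (auto simp: zero_list_def plus_list_def)
end

lemma poly_mapping_sum_single:
  "p = (\<Sum>k\<in>Poly_Mapping.keys p. Poly_Mapping.single k (Poly_Mapping.lookup p k))"
  by (rule poly_mapping_eqI) (simp add: lookup_sum lookup_single when_def in_keys_iff)

lemma poly_mapping_induct [case_names zero single_add]:
  fixes p :: "'a \<Rightarrow>\<^sub>0 'b::comm_monoid_add"
  assumes "R 0" and "\<And>p k c. R p \<Longrightarrow> R (Poly_Mapping.single k c + p)"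
  shows "R p"
proof -
  have "R (\<Sum>k\<in>S. Poly_Mapping.single k (Poly_Mapping.lookup p k))" if "finite S" for S
    using that by (induction S rule: finite_induct) (auto intro: assms)
  then show ?thesis
    using poly_mapping_sum_single[of p] by (metis finite_keys)
qed

definition relabel :: "('a \<Rightarrow> 'b) \<Rightarrow> ('a \<Rightarrow>\<^sub>0 'c::comm_monoid_add) \<Rightarrow> 'b \<Rightarrow>\<^sub>0 'c" where
  "relabel h p = (\<Sum>k\<in>Poly_Mapping.keys p. Poly_Mapping.single (h k) (Poly_Mapping.lookup p k))"

lemma relabel_zero [simp]: "relabel h 0 = 0"
  by (simp add: relabel_def)

lemma relabel_single [simp]: "relabel h (Poly_Mapping.single k c) = Poly_Mapping.single (h k) c"
  by (simp add: relabel_def)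

lemma relabel_add: "relabel h (p + q) = relabel h p + relabel h q"
  unfolding relabel_def by (rule setsum_keys_plus_distrib) (auto simp: single_add)

lemma relabel_diff: "relabel h (p - q) = relabel h p - relabel h (q :: _ \<Rightarrow>\<^sub>0 'c::ab_group_add)"
  by (metis add_diff_cancel diff_add_cancel relabel_add)

lemma relabel_relabel: "relabel h1 (relabel h2 p) = relabel (\<lambda>k. h1 (h2 k)) p"
  by (induction p rule: poly_mapping_induct) (simp_all add: relabel_add)

lemma relabel_ident: "relabel (\<lambda>k. k) p = p"
  by (induction p rule: poly_mapping_induct) (simp_all add: relabel_add)

lemma lookup_relabel_inj:
  "inj h \<Longrightarrow> Poly_Mapping.lookup (relabel h p) (h k) = Poly_Mapping.lookup p k"
  by (induction p rule: poly_mapping_induct)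
    (simp_all add: relabel_add lookup_add lookup_single when_def inj_eq)

lemma ncmul_eq_times: "ncmul p q = p * q"
proof -
  have "p * q = (\<Sum>u\<in>Poly_Mapping.keys p. Poly_Mapping.single u (Poly_Mapping.lookup p u)) *
      (\<Sum>v\<in>Poly_Mapping.keys q. Poly_Mapping.single v (Poly_Mapping.lookup q v))"
    using poly_mapping_sum_single[of p] poly_mapping_sum_single[of q] by simp
  also have "\<dots> = ncmul p q"
    by (simp add: ncmul_def sum_distrib_left sum_distrib_right mult_single plus_list_def)
      (rule sum.swap)
  finally show ?thesis by simp
qed

lemma times_single_one_right:
  "(p :: ('x, 'k::comm_semiring_1) ncpoly) * Poly_Mapping.single v 1 = relabel (\<lambda>u. u @ v) p"
  by (induction p rule: poly_mapping_induct)
    (simp_all add: relabel_add distrib_right mult_single plus_list_def)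

lemma times_single_one_left:
  "Poly_Mapping.single w 1 * (p :: ('x, 'k::comm_semiring_1) ncpoly) = relabel (\<lambda>u. w @ u) p"
  by (induction p rule: poly_mapping_induct)
    (simp_all add: relabel_add distrib_left mult_single plus_list_def)

lemma single_Nil_commute:
  "Poly_Mapping.single [] (c::'k::comm_semiring_1) * p = p * Poly_Mapping.single [] c"
  by (induction p rule: poly_mapping_induct)
    (simp_all add: distrib_left distrib_right mult_single plus_list_def mult.commute)

lemma single_eq_scaled_single_one:
  "Poly_Mapping.single v (c::'k::comm_semiring_1) = Poly_Mapping.single [] c * Poly_Mapping.single v 1"
  by (simp add: mult_single plus_list_def)

lemma Tag_untag [simp]: "Tag (untag t) = t"
  by (cases t) simp

lemma inj_untag: "inj untag"
  by (metis Tag_untag injI)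

definition untag_poly :: "('x, 'k::comm_monoid_add) tpoly \<Rightarrow> ('x, 'k) ncpoly" where
  "untag_poly f = relabel untag f"

lemma tag_eq_relabel: "tag p = relabel Tag p"
  by (simp add: tag_def tag_left_def relabel_def)

lemma untag_poly_tag [simp]: "untag_poly (tag p) = p"
  by (simp add: untag_poly_def tag_eq_relabel relabel_relabel relabel_ident)

lemma tag_untag_poly [simp]: "tag (untag_poly f) = f"
  by (simp add: untag_poly_def tag_eq_relabel relabel_relabel relabel_ident)

lemma tag_zero [simp]: "tag 0 = 0"
  by (simp add: tag_eq_relabel)

lemma tag_add: "tag (p + q) = tag p + tag q"
  by (simp add: tag_eq_relabel relabel_add)

lemma tag_diff: "tag (p - q) = tag p - tag (q :: ('x, 'k::ab_group_add) ncpoly)"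
  by (simp add: tag_eq_relabel relabel_diff)

lemma tag_left_eq_relabel: "tag_left w p = relabel (\<lambda>m. Tag (w @ m)) p"
  by (simp add: tag_left_def relabel_def)

lemma tright_eq_relabel: "tright f v = relabel (\<lambda>t. Tag (untag t @ v)) f"
  by (simp add: tright_def relabel_def)

lemma tag_left_eq_tag_times:
  "tag_left w (p :: ('x, 'k::comm_semiring_1) ncpoly) = tag (Poly_Mapping.single w 1 * p)"
  by (simp add: tag_left_eq_relabel tag_eq_relabel relabel_relabel times_single_one_left)

lemma tright_tag:
  "tright (tag (q :: ('x, 'k::comm_semiring_1) ncpoly)) v = tag (q * Poly_Mapping.single v 1)"
  by (simp add: tright_eq_relabel tag_eq_relabel relabel_relabel times_single_one_right)

lemma lookup_psmult: "Poly_Mapping.lookup (psmult c f) t = c * Poly_Mapping.lookup f t"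
  by (simp add: psmult_def Poly_Mapping.map.rep_eq when_def)

lemma psmult_zero [simp]: "psmult c 0 = 0"
  by (rule poly_mapping_eqI) (simp add: lookup_psmult)

lemma psmult_tag:
  "psmult c (tag p) = tag (Poly_Mapping.single [] (c::'k::comm_semiring_1) * p)"
proof -
  have "psmult c (tag p) = relabel Tag (psmult c p)"
  proof (rule poly_mapping_eqI)
    fix t :: "'a tterm"
    obtain m where "t = Tag m" by (cases t)
    then show "Poly_Mapping.lookup (psmult c (tag p)) t = Poly_Mapping.lookup (relabel Tag (psmult c p)) t"
      by (simp add: lookup_psmult tag_eq_relabel lookup_relabel_inj inj_def)
  qed
  then show ?thesis
    by (simp add: tag_eq_relabel psmult_def mult_map_scale_conv_mult zero_list_def)
qed

lemma tag_times_single: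
  "tag ((q :: ('x, 'k::comm_semiring_1) ncpoly) * Poly_Mapping.single v c) =
    psmult c (tright (tag q) v)"
proof -
  have "q * Poly_Mapping.single v c = Poly_Mapping.single [] c * (q * Poly_Mapping.single v 1)"
    by (simp add: single_eq_scaled_single_one[of v c] single_Nil_commute mult.assoc)
  then show ?thesis
    by (simp add: psmult_tag tright_tag)
qed

lemma tag_single_times_times_single:
  "tag (Poly_Mapping.single w a * p * Poly_Mapping.single v (b::'k::comm_semiring_1)) =
    psmult (a * b) (tag_left w (ncmul p (Poly_Mapping.single v 1)))"
proof -
  let ?X = "Poly_Mapping.single w 1 * (p * Poly_Mapping.single v 1)"
  have "Poly_Mapping.single v b = Poly_Mapping.single v 1 * Poly_Mapping.single [] b"
    by (simp add: mult_single plus_list_def)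
  then have "Poly_Mapping.single w a * p * Poly_Mapping.single v b =
      Poly_Mapping.single [] a * (?X * Poly_Mapping.single [] b)"
    by (simp add: single_eq_scaled_single_one[of w a] mult.assoc)
  also have "\<dots> = Poly_Mapping.single [] (a * b) * ?X"
    by (simp add: single_Nil_commute[symmetric] mult.assoc[symmetric] mult_single plus_list_def)
  finally show ?thesis
    by (simp add: psmult_tag tag_left_eq_tag_times ncmul_eq_times)
qed

section \<open>The natural morphism\<close>

lemma
  assumes "k_algebra \<iota>"
  shows k_algebra_add: "\<iota> (a + b) = \<iota> a + \<iota> b"
    and k_algebra_mult: "\<iota> (a * b) = \<iota> a * \<iota> b"
    and k_algebra_central: "\<iota> a * x = x * \<iota> a"
  using assms unfolding k_algebra_def by blast+

lemma k_algebra_zero: "k_algebra \<iota> \<Longrightarrow> \<iota> 0 = 0"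
  using k_algebra_add[of \<iota> 0 0] by simp

lemma theta_zero [simp]: "theta \<iota> g 0 = 0"
  by (simp add: theta_def)

lemma theta_single:
  "k_algebra \<iota> \<Longrightarrow> theta \<iota> g (Poly_Mapping.single m c) = \<iota> c * prod_list (map g m)"
  by (simp add: theta_def k_algebra_zero)

lemma theta_add:
  assumes "k_algebra \<iota>"
  shows "theta \<iota> g (p + q) = theta \<iota> g p + theta \<iota> g q"
  unfolding theta_def
  by (rule setsum_keys_plus_distrib)
    (simp_all add: k_algebra_zero[OF assms] k_algebra_add[OF assms] distrib_right)

lemma theta_diff: "k_algebra \<iota> \<Longrightarrow> theta \<iota> g (p - q) = theta \<iota> g p - theta \<iota> g q"
  by (metis theta_add diff_add_cancel eq_diff_eq)

lemma theta_mult_single: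
  assumes "k_algebra \<iota>"
  shows "theta \<iota> g (Poly_Mapping.single u a * Poly_Mapping.single v b) =
    theta \<iota> g (Poly_Mapping.single u a) * theta \<iota> g (Poly_Mapping.single v b)"
proof -
  have "theta \<iota> g (Poly_Mapping.single u a * Poly_Mapping.single v b) =
      \<iota> a * \<iota> b * (prod_list (map g u) * prod_list (map g v))"
    by (simp add: mult_single plus_list_def theta_single[OF assms] k_algebra_mult[OF assms])
  also have "\<dots> = \<iota> a * prod_list (map g u) * (\<iota> b * prod_list (map g v))"
    by (metis k_algebra_central[OF assms, of b "prod_list (map g u)"] mult.assoc)
  finally show ?thesis
    by (simp add: theta_single[OF assms])
qed

lemma theta_mult:
  assumes "k_algebra \<iota>"
  shows "theta \<iota> g (p * q) = theta \<iota> g p * theta \<iota> g q"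
proof (induction p rule: poly_mapping_induct)
  case (single_add p u a)
  have "theta \<iota> g (Poly_Mapping.single u a * q) = theta \<iota> g (Poly_Mapping.single u a) * theta \<iota> g q"
  proof (induction q rule: poly_mapping_induct)
    case (single_add q v b)
    then show ?case
      by (simp only: distrib_left theta_add[OF assms] theta_mult_single[OF assms])
  qed simp
  with single_add show ?case
    by (simp only: distrib_right theta_add[OF assms])
qed simp

lemma
  assumes "monoid_wellorder lt"
  shows monoid_wellorder_irreflp: "irreflp lt"
    and monoid_wellorder_transp: "transp lt"
    and monoid_wellorder_totalp: "totalp lt"
  using assms unfolding monoid_wellorder_def irreflp_def transp_def totalp_on_def by blast+

lemma ex_greatest_on:
  assumes "finite S" "S \<noteq> {}" "inj_on h S" "transp lt" "totalp lt"
  shows "\<exists>m\<in>S. \<forall>m'\<in>S. m' \<noteq> m \<longrightarrow> lt (h m') (h m)"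
  using assms
proof (induction S rule: finite_ne_induct)
  case (insert x S)
  then obtain m where m: "m \<in> S" "\<forall>m'\<in>S. m' \<noteq> m \<longrightarrow> lt (h m') (h m)"
    by auto
  have "h x \<noteq> h m"
    using insert.prems(1) insert.hyps m(1) by (auto simp: inj_on_def)
  then have "lt (h m) (h x) \<or> lt (h x) (h m)"
    using \<open>totalp lt\<close> by (auto simp: totalp_on_def)
  then show ?case
  proof
    assume "lt (h m) (h x)"
    moreover have "lt (h m') (h m)" if "m' \<in> S" "m' \<noteq> m" for m'
      using m that by blast
    ultimately have "\<forall>m'\<in>S. lt (h m') (h x)"
      using \<open>transp lt\<close> by (auto dest: transpD)
    then show ?thesis by blast
  next
    assume "lt (h x) (h m)"
    then show ?thesis using m by auto
  qed
qed simp

lemma the_greatest_on_in: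
  assumes "finite S" "S \<noteq> {}" "inj_on h S" "irreflp lt" "transp lt" "totalp lt"
  shows "(THE m. m \<in> S \<and> (\<forall>m'\<in>S. m' \<noteq> m \<longrightarrow> lt (h m') (h m))) \<in> S"
proof -
  obtain m where m: "m \<in> S" "\<forall>m'\<in>S. m' \<noteq> m \<longrightarrow> lt (h m') (h m)"
    using ex_greatest_on[OF assms(1-3,5,6)] by blast
  have uniq: "m' = m" if "m' \<in> S" "\<forall>m''\<in>S. m'' \<noteq> m' \<longrightarrow> lt (h m'') (h m')" for m'
  proof (rule ccontr)
    assume "m' \<noteq> m"
    then have "lt (h m') (h m)" "lt (h m) (h m')"
      using m that by auto
    then have "lt (h m') (h m')"
      by (rule transpD[OF assms(5)])
    then show False
      using assms(4) by (simp add: irreflpD)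
  qed
  have "(THE m. m \<in> S \<and> (\<forall>m'\<in>S. m' \<noteq> m \<longrightarrow> lt (h m') (h m))) = m"
    by (rule the_equality) (use m uniq in blast)+
  with m show ?thesis by simp
qed

lemma LT_in_keys:
  assumes "monoid_wellorder lt" "p \<noteq> 0"
  shows "LT lt p \<in> Poly_Mapping.keys p"
  unfolding LT_def
  by (rule the_greatest_on_in[where h = "\<lambda>m. m"])
    (simp_all add: assms monoid_wellorder_irreflp monoid_wellorder_transp monoid_wellorder_totalp)

lemma tLT_in_keys:
  assumes "monoid_wellorder lt" "f \<noteq> 0"
  shows "tLT lt f \<in> Poly_Mapping.keys f"
  unfolding tLT_def
  by (rule the_greatest_on_in)
    (simp_all add: assms monoid_wellorder_irreflp monoid_wellorder_transp monoid_wellorder_totalp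
      inj_on_subset[OF inj_untag])

section \<open>Reduction steps and shifts\<close>

lemma equivclp_add_multiple:
  fixes e :: "'t \<Rightarrow>\<^sub>0 'k::field"
  assumes e: "Poly_Mapping.lookup e t \<noteq> 0"
    and step: "\<And>f. Poly_Mapping.lookup f t \<noteq> 0 \<Longrightarrow>
      r f (f - psmult (Poly_Mapping.lookup f t / Poly_Mapping.lookup e t) e)"
  shows "equivclp r f (f + psmult c e)"
proof -
  define z where "z y = y - psmult (Poly_Mapping.lookup y t / Poly_Mapping.lookup e t) e" for y
  have to_z: "equivclp r y (z y)" for y
  proof (cases "Poly_Mapping.lookup y t = 0")
    case True
    have "psmult 0 e = 0" by (rule poly_mapping_eqI) (simp add: lookup_psmult)
    with True show ?thesis by (simp add: z_def)
  next
    case False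
    then show ?thesis using step by (auto simp: z_def)
  qed
  \<comment> \<open>\<open>z y\<close> is the member of \<open>y + K e\<close> vanishing at \<open>t\<close>,
    so it is the same for \<open>f\<close> and \<open>f + c e\<close>.\<close>
  have "z (f + psmult c e) = z f"
    by (rule poly_mapping_eqI)
      (use e in \<open>simp add: z_def lookup_add lookup_minus lookup_psmult field_simps\<close>)
  then show ?thesis
    using to_z[of f] to_z[of "f + psmult c e"] by (metis equivclp_sym equivclp_trans)
qed

lemma equivclp_red_add_tright:
  fixes Q :: "('x, 'k::field) ncpoly set"
  assumes "monoid_wellorder lt" "q \<in> Q"
  shows "equivclp (red lt (tag ` Q) P) f (f + psmult c (tright (tag q) v))"
proof (cases "tag q = 0")
  case True
  then show ?thesis by (simp add: tright_eq_relabel)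
next
  case False
  let ?t = "Tag (untag (tLT lt (tag q)) @ v)"
  have inj: "inj (\<lambda>t. Tag (untag t @ v))"
    by (rule injI) (metis Tag_untag append_same_eq tterm.inject)
  have lookup_t: "Poly_Mapping.lookup (tright (tag q) v) ?t = tLC lt (tag q)"
    unfolding tright_eq_relabel tLC_def by (rule lookup_relabel_inj[OF inj])
  have "tLC lt (tag q) \<noteq> 0"
    using tLT_in_keys[OF assms(1) False] by (simp add: tLC_def in_keys_iff)
  then show ?thesis
  proof (rule equivclp_add_multiple[where t = ?t and e = "tright (tag q) v", unfolded lookup_t])
    fix f :: "('x, 'k) tpoly"
    assume "Poly_Mapping.lookup f ?t \<noteq> 0"
    then show "red lt (tag ` Q) P f
        (f - psmult (Poly_Mapping.lookup f ?t / tLC lt (tag q)) (tright (tag q) v))"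
      unfolding red_def using assms(2) False by blast
  qed
qed

lemma equivclp_red_add_tag_left:
  fixes P :: "('x, 'k::field) ncpoly set"
  assumes "monoid_wellorder lt" "p \<in> P"
  shows "equivclp (red lt (tag ` Q) P) f
    (f + psmult c (tag_left w (ncmul p (Poly_Mapping.single v 1))))"
proof (cases "p = 0")
  case True
  then show ?thesis by (simp add: tag_left_eq_relabel ncmul_eq_times)
next
  case False
  let ?e = "tag_left w (ncmul p (Poly_Mapping.single v 1))"
  let ?t = "Tag (w @ LT lt p @ v)"
  have inj: "inj (\<lambda>m. Tag (w @ m @ v))"
    by (rule injI) simp
  have "?e = relabel (\<lambda>m. Tag (w @ m @ v)) p"
    by (simp add: tag_left_eq_relabel ncmul_eq_times times_single_one_right relabel_relabel)
  then have lookup_t: "Poly_Mapping.lookup ?e ?t = LC lt p"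
    unfolding LC_def using lookup_relabel_inj[OF inj] by simp
  have "LC lt p \<noteq> 0"
    using LT_in_keys[OF assms(1) False] by (simp add: LC_def in_keys_iff)
  then show ?thesis
  proof (rule equivclp_add_multiple[where t = ?t and e = ?e, unfolded lookup_t])
    fix f :: "('x, 'k) tpoly"
    assume "Poly_Mapping.lookup f ?t \<noteq> 0"
    then show "red lt (tag ` Q) P f (f - psmult (Poly_Mapping.lookup f ?t / LC lt p) ?e)"
      unfolding red_def using assms(2) False by blast
  qed
qed

definition shift_invariant :: "('a \<Rightarrow> 'a \<Rightarrow> bool) \<Rightarrow> 'a::ab_group_add \<Rightarrow> bool" where
  "shift_invariant r d \<longleftrightarrow> (\<forall>f. equivclp r f (f + d))"

lemma shift_invariant_zero: "shift_invariant r 0"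
  by (simp add: shift_invariant_def)

lemma shift_invariant_add:
  assumes "shift_invariant r a" "shift_invariant r b"
  shows "shift_invariant r (a + b)"
  unfolding shift_invariant_def
proof
  fix f
  have "equivclp r f (f + a)" "equivclp r (f + a) (f + a + b)"
    using assms by (simp_all add: shift_invariant_def)
  then show "equivclp r f (f + (a + b))"
    by (simp add: add.assoc equivclp_trans)
qed

lemma shift_invariant_uminus:
  assumes "shift_invariant r a"
  shows "shift_invariant r (- a)"
  unfolding shift_invariant_def
proof
  fix f
  have "equivclp r (f - a) (f - a + a)"
    using assms unfolding shift_invariant_def by blast
  then show "equivclp r f (f + - a)"
    by (simp add: equivclp_sym)
qed

lemma shift_invariant_additive:
  fixes F :: "('b \<Rightarrow>\<^sub>0 'c::comm_monoid_add) \<Rightarrow> 'a::ab_group_add"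
  assumes "\<And>k c. shift_invariant r (F (Poly_Mapping.single k c))"
    and "\<And>x y. F (x + y) = F x + F y"
  shows "shift_invariant r (F p)"
proof (induction p rule: poly_mapping_induct)
  case zero
  have "F 0 = 0" using assms(2)[of 0 0] by simp
  then show ?case by (simp add: shift_invariant_zero)
next
  case (single_add p k c)
  then show ?case by (simp add: assms shift_invariant_add)
qed

lemma shift_invariant_tag_ideal2:
  assumes "monoid_wellorder lt" "a \<in> ideal2 P"
  shows "shift_invariant (red lt (tag ` Q) P) (tag (u * a * s))"
  using assms(2)
proof (induction arbitrary: u s)
  case (gen p)
  show ?case
  proof (rule shift_invariant_additive[where F = "\<lambda>u. tag (u * p * s)"])
    fix w a
    show "shift_invariant (red lt (tag ` Q) P) (tag (Poly_Mapping.single w a * p * s))"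
      by (rule shift_invariant_additive[where F = "\<lambda>s. tag (Poly_Mapping.single w a * p * s)"])
        (simp_all add: tag_single_times_times_single shift_invariant_def distrib_left tag_add
          equivclp_red_add_tag_left[OF assms(1) gen])
  qed (simp add: distrib_right tag_add)
next
  case (add a b)
  then show ?case
    by (simp add: distrib_left distrib_right tag_add shift_invariant_add)
next
  case (lmul a u')
  then show ?case
    using lmul.IH[of "u * u'" s] by (simp add: ncmul_eq_times mult.assoc)
next
  case (rmul a u')
  then show ?case
    using rmul.IH[of u "u' * s"] by (simp add: ncmul_eq_times mult.assoc)
qed (simp add: shift_invariant_zero)

lemma shift_invariant_tag_times:
  assumes "monoid_wellorder lt" "q \<in> Q"
  shows "shift_invariant (red lt (tag ` Q) P) (tag (q * s))"
  by (rule shift_invariant_additive[where F = "\<lambda>s. tag (q * s)"])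
    (simp_all add: tag_times_single shift_invariant_def distrib_left tag_add
      equivclp_red_add_tright[OF assms])

lemma ex_shift_invariant_preimage_rideal:
  assumes "monoid_wellorder lt" "k_algebra \<iota>" "surj (theta \<iota> g)"
    and "x \<in> rideal (theta \<iota> g ` Q)"
  shows "\<exists>p. theta \<iota> g p = x \<and> (\<forall>s. shift_invariant (red lt (tag ` Q) P) (tag (p * s)))"
  using assms(4)
proof induction
  case zero
  show ?case by (intro exI[of _ 0]) (simp add: shift_invariant_zero)
next
  case (gen x)
  then obtain q where "q \<in> Q" "x = theta \<iota> g q" by blast
  then show ?case
    using shift_invariant_tag_times[OF assms(1)] by blast
next
  case (add a b)
  then obtain p1 p2 where "theta \<iota> g p1 = a" "\<forall>s. shift_invariant (red lt (tag ` Q) P) (tag (p1 * s))"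
    "theta \<iota> g p2 = b" "\<forall>s. shift_invariant (red lt (tag ` Q) P) (tag (p2 * s))"
    by blast
  then show ?case
    by (intro exI[of _ "p1 + p2"])
      (simp add: theta_add[OF assms(2)] distrib_right tag_add shift_invariant_add)
next
  case (rmul a r)
  then obtain p where "theta \<iota> g p = a" "\<forall>s. shift_invariant (red lt (tag ` Q) P) (tag (p * s))"
    by blast
  moreover obtain s where "r = theta \<iota> g s"
    using assms(3) by (metis surj_def)
  ultimately show ?case
    by (intro exI[of _ "p * s"]) (simp add: theta_mult[OF assms(2)] mult.assoc)
qed

section \<open>Classes of the reduction congruence\<close>

lemma rideal_uminus: "a \<in> rideal S \<Longrightarrow> - a \<in> rideal S"
  using rideal.rmul[of a S "- 1"] by simp

lemma equiv_rideal_congruence: "equiv UNIV {(a, b). a - b \<in> rideal S}"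
proof (rule equivI)
  show "refl {(a, b). a - b \<in> rideal S}"
    by (simp add: refl_on_def rideal.zero)
  show "sym {(a, b). a - b \<in> rideal S}"
    by (rule symI) (use rideal_uminus in fastforce)
  show "trans {(a, b). a - b \<in> rideal S}"
    by (rule transI) (use rideal.add in fastforce)
qed simp

lemma theta_untag_diff_in_rideal_if_red:
  assumes ka: "k_algebra \<iota>" and ker: "\<forall>p. theta \<iota> g p = 0 \<longleftrightarrow> p \<in> ideal2 P"
    and "red lt (tag ` Q) P f h"
  shows "theta \<iota> g (untag_poly f) - theta \<iota> g (untag_poly h) \<in> rideal (theta \<iota> g ` Q)"
proof -
  have diff: "theta \<iota> g (untag_poly f) - theta \<iota> g (untag_poly (f - tag d)) = theta \<iota> g d" for d
  proof -
    have "f - tag d = tag (untag_poly f - d)"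
      by (simp add: tag_diff)
    then show ?thesis
      by (simp add: theta_diff[OF ka])
  qed
  from \<open>red lt (tag ` Q) P f h\<close> consider
      (tagged) q c v where "q \<in> Q" "h = f - psmult c (tright (tag q) v)"
    | (untagged) p c w v where "p \<in> P"
        "h = f - psmult c (tag_left w (ncmul p (Poly_Mapping.single v 1)))"
    unfolding red_def by blast
  then show ?thesis
  proof cases
    case tagged
    then have "theta \<iota> g (untag_poly f) - theta \<iota> g (untag_poly h) =
        theta \<iota> g q * theta \<iota> g (Poly_Mapping.single v c)"
      using diff[of "q * Poly_Mapping.single v c"] by (simp add: tag_times_single theta_mult[OF ka])
    also have "\<dots> \<in> rideal (theta \<iota> g ` Q)"
      using \<open>q \<in> Q\<close> by (blast intro: rideal.rmul rideal.gen)
    finally show ?thesis .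
  next
    case untagged
    let ?d = "Poly_Mapping.single w c * p * Poly_Mapping.single v 1"
    have "?d \<in> ideal2 P"
      using ideal2.lmul[OF ideal2.rmul[OF ideal2.gen[OF \<open>p \<in> P\<close>]]] by (simp add: ncmul_eq_times mult.assoc)
    then have "theta \<iota> g ?d = 0"
      using ker by blast
    moreover have "theta \<iota> g (untag_poly f) - theta \<iota> g (untag_poly h) = theta \<iota> g ?d"
      using diff[of ?d] untagged(2) by (simp add: tag_single_times_times_single)
    ultimately show ?thesis
      by (simp add: rideal.zero)
  qed
qed

lemma equivclp_red_iff_rideal:
  assumes wo: "monoid_wellorder lt" and ka: "k_algebra \<iota>" and su: "surj (theta \<iota> g)"
    and ker: "\<forall>p. theta \<iota> g p = 0 \<longleftrightarrow> p \<in> ideal2 P"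
  shows "equivclp (red lt (tag ` Q) P) f h \<longleftrightarrow>
    theta \<iota> g (untag_poly f) - theta \<iota> g (untag_poly h) \<in> rideal (theta \<iota> g ` Q)"
    (is "equivclp ?r f h \<longleftrightarrow> ?\<Phi> f - ?\<Phi> h \<in> ?I")
proof
  assume "equivclp ?r f h"
  then show "?\<Phi> f - ?\<Phi> h \<in> ?I"
  proof (induction rule: equivclp_induct)
    case base
    then show ?case by (simp add: rideal.zero)
  next
    case (step y z)
    from step.hyps(2) have "?\<Phi> y - ?\<Phi> z \<in> ?I"
      using theta_untag_diff_in_rideal_if_red[OF ka ker] rideal_uminus by fastforce
    with step.IH show ?case
      using rideal.add by fastforce
  qed
next
  assume "?\<Phi> f - ?\<Phi> h \<in> ?I"
  then obtain p where p: "theta \<iota> g p = ?\<Phi> f - ?\<Phi> h" "\<forall>s. shift_invariant ?r (tag (p * s))"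
    using ex_shift_invariant_preimage_rideal[OF wo ka su] by blast
  define d where "d = untag_poly f - untag_poly h - p"
  have "theta \<iota> g d = 0"
    by (simp add: d_def theta_diff[OF ka] p(1))
  then have "shift_invariant ?r (tag (1 * d * 1))"
    using ker shift_invariant_tag_ideal2[OF wo] by blast
  moreover have "tag d + tag p = f - h"
    by (simp add: d_def tag_diff)
  ultimately have "shift_invariant ?r (- (f - h))"
    using p(2)[rule_format, of 1] by (metis shift_invariant_add shift_invariant_uminus mult_1 mult_1_right)
  then show "equivclp ?r f h"
    unfolding shift_invariant_def by (metis add_diff_cancel_left' diff_add_cancel minus_diff_eq)
qed

lemma bij_betw_quotient_vimage:
  fixes \<Phi> :: "'a \<Rightarrow> 'b" and E :: "('b \<times> 'b) set"
  assumes "surj \<Phi>" "equiv UNIV E" "\<And>x y. r x y \<longleftrightarrow> (\<Phi> x, \<Phi> y) \<in> E"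
  shows "\<exists>\<phi>. bij_betw \<phi> (UNIV // {(x, y). r x y}) (UNIV // E)"
proof -
  define F where "F x = E `` {\<Phi> x}" for x
  have "F ` UNIV = (\<lambda>b. E `` {b}) ` range \<Phi>"
    by (simp add: F_def image_image)
  also have "\<dots> = UNIV // E"
    by (auto simp: assms(1) quotient_def)
  moreover have "{(x, y). r x y} = kernel F"
    using assms(2,3) by (auto simp: kernel_def F_def eq_equiv_class_iff)
  ultimately show ?thesis
    using bij_betw_image_quotient_kernel[of F UNIV] by (metis bij_betw_inv)
qed

theorem theorem3p6:
  fixes lt :: "'x list \<Rightarrow> 'x list \<Rightarrow> bool"
    and \<iota> :: "'k::field \<Rightarrow> 'a::ring_1"
    and g :: "'x \<Rightarrow> 'a"
    and P Q :: "('x, 'k) ncpoly set"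
  assumes "monoid_wellorder lt"
    and "k_algebra \<iota>"
    and "surj (theta \<iota> g)"
    and "\<forall>p. theta \<iota> g p = 0 \<longleftrightarrow> p \<in> ideal2 P"
  shows "\<exists>\<phi>. bij_betw \<phi>
           (UNIV // {(f, h). equivclp (red lt (tag ` Q) P) f h})
           (UNIV // {(a, b). a - b \<in> rideal (theta \<iota> g ` Q)})"
proof -
  have surj: "surj (\<lambda>f. theta \<iota> g (untag_poly f))"
    using assms(3) unfolding surj_def by (metis untag_poly_tag)
  have iff: "equivclp (red lt (tag ` Q) P) f h \<longleftrightarrow>
      (theta \<iota> g (untag_poly f), theta \<iota> g (untag_poly h)) \<in> {(a, b). a - b \<in> rideal (theta \<iota> g ` Q)}"
    for f h
    using equivclp_red_iff_rideal[OF assms] by simp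
  show ?thesis
    by (rule bij_betw_quotient_vimage[OF surj equiv_rideal_congruence iff])
qed

end
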